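(* Let $E$ be an integer such that all quantities below are normal double-precision numbers. Let $x$ and $M$ be positive double-precision numbers with $x \in [2^{E}, 2^{E+1})$, $M \ge 2$, and suppose $y = x \otimes M \in [2^{E+1}, 2^{E+2})$. Then $(x \otimes M) \oslash M = x$. *)

theory Defs
  imports Complex_Main
begin

text \<open>IEEE 754 binary64 (double precision) finite values, modelled as reals:
  r = m * 2^e with integer significand |m| < 2^53 and exponent -1074 <= e <= 971
  (this covers subnormals, normals, and zero; largest value (2^53-1)*2^971).\<close>

definition is_double :: "real \<Rightarrow> bool" where
  "is_double r \<longleftrightarrow> (\<exists>m::int. \<exists>e::int.
      r = real_of_int m * 2 powr real_of_int e \<and> \<bar>m\<bar> < 2^53 \<and> -1074 \<le> e \<and> e \<le> 971)"

definition even_double :: "real \<Rightarrow> bool" where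
  "even_double r \<longleftrightarrow> (\<exists>m::int. \<exists>e::int.
      r = real_of_int m * 2 powr real_of_int e \<and> even m \<and> \<bar>m\<bar> < 2^53 \<and> -1074 \<le> e \<and> e \<le> 971)"

text \<open>Round to nearest, ties to even (IEEE default rounding), for results in the finite range.\<close>
definition rnd :: "real \<Rightarrow> real" where
  "rnd r = (THE f. is_double f \<and> (\<forall>g. is_double g \<longrightarrow> \<bar>f - r\<bar> \<le> \<bar>g - r\<bar>) \<and>
       ((\<exists>g. is_double g \<and> g \<noteq> f \<and> \<bar>g - r\<bar> = \<bar>f - r\<bar>) \<longrightarrow> even_double f))"

definition fmul :: "real \<Rightarrow> real \<Rightarrow> real" where
  "fmul x y = rnd (x * y)"

definition fdiv :: "real \<Rightarrow> real \<Rightarrow> real" where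
  "fdiv x y = rnd (x / y)"

end

theory Submission
  imports Defs
begin

text \<open>Let u = 2^(E-52), the spacing of doubles in [2^E, 2^(E+1)). The exact product x M lies
  in [2^(E+1), 2^(E+2)], where doubles are 2u apart, so x \<otimes> M differs from x M by at most u.
  Dividing by M > 2 brings (x \<otimes> M) / M within u/2 of x, while every other double is at
  least u away from x as soon as x > 2^E; hence x is the unique nearest double. In the remaining
  cases M = 2 or x = 2^E the product is a double scaled by a power of two, so it is exact and the
  division returns x.\<close>

lemma two_powr_shift:
  assumes "k \<le> e"
  shows "(2::real) powr real_of_int e = 2 powr real_of_int k * 2 ^ nat (e - k)"
proof -
  have "(2::real) powr real_of_int e = 2 powr (real_of_int k + real_of_int (e - k))"
    by simp
  also have "\<dots> = 2 powr real_of_int k * 2 powr real_of_int (e - k)"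
    by (rule powr_add)
  also have "2 powr real_of_int (e - k) = (2::real) ^ nat (e - k)"
    using assms by (metis diff_ge_0_iff_ge of_nat_nat powr_realpow zero_less_numeral)
  finally show ?thesis .
qed

lemma is_double_on_grid:
  assumes "is_double g" "2 powr real_of_int k \<le> \<bar>g\<bar>"
  obtains b :: int where "g = real_of_int b * 2 powr real_of_int (k - 52)"
proof -
  obtain m e where g: "g = real_of_int m * 2 powr real_of_int e" "\<bar>m\<bar> < 2^53"
    using assms(1) unfolding is_double_def by blast
  have "real_of_int \<bar>m\<bar> < 2^53"
    using g(2) by (metis of_int_less_iff of_int_numeral of_int_power)
  hence "\<bar>g\<bar> < 2^53 * 2 powr real_of_int e"
    using g(1) by (simp add: abs_mult)
  also have "\<dots> = 2 powr real_of_int (e + 53)"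
    using two_powr_shift[of e "e + 53"] by simp
  finally have "2 powr real_of_int k < 2 powr real_of_int (e + 53)"
    using assms(2) by linarith
  hence "k < e + 53" by (simp add: powr_less_cancel_iff)
  hence "g = real_of_int (m * 2 ^ nat (e - (k - 52))) * 2 powr real_of_int (k - 52)"
    using g(1) two_powr_shift[of "k - 52" e] by simp
  thus thesis by (rule that)
qed

lemma is_double_intro:
  "\<bar>n\<bar> < 2^53 \<Longrightarrow> -1074 \<le> j \<Longrightarrow> j \<le> 971 \<Longrightarrow> is_double (real_of_int n * 2 powr real_of_int j)"
  unfolding is_double_def by blast

lemma even_double_intro:
  "\<bar>n\<bar> < 2^53 \<Longrightarrow> even n \<Longrightarrow> -1074 \<le> j \<Longrightarrow> j \<le> 971 \<Longrightarrow>
    even_double (real_of_int n * 2 powr real_of_int j)"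
  unfolding even_double_def by blast

text \<open>A normalized odd significand cannot be rewritten with an even one: shifting it
  right is impossible and shifting it left overflows 53 bits.\<close>
lemma not_even_double_odd:
  assumes "2^52 \<le> n" "n < 2^53" "odd n"
  shows "\<not> even_double (real_of_int n * 2 powr real_of_int j)"
proof
  assume "even_double (real_of_int n * 2 powr real_of_int j)"
  then obtain m e where me: "real_of_int n * 2 powr real_of_int j = real_of_int m * 2 powr real_of_int e"
    "even m" "\<bar>m\<bar> < 2^53" unfolding even_double_def by blast
  show False
  proof (cases "j \<le> e")
    case True
    hence "real_of_int n * 2 powr real_of_int j = real_of_int (m * 2 ^ nat (e - j)) * 2 powr real_of_int j"
      using me(1) two_powr_shift[OF True] by simp
    hence "real_of_int n = real_of_int (m * 2 ^ nat (e - j))" by simp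
    hence "n = m * 2 ^ nat (e - j)" by (simp only: of_int_eq_iff)
    thus False using me(2) assms(3) by simp
  next
    case False
    hence "real_of_int m * 2 powr real_of_int e = real_of_int (n * 2 ^ nat (j - e)) * 2 powr real_of_int e"
      using me(1) two_powr_shift[of e j] by simp
    hence "real_of_int m = real_of_int (n * 2 ^ nat (j - e))" by simp
    hence m: "m = n * 2 ^ nat (j - e)" by (simp only: of_int_eq_iff)
    have "(2::int) ^ 1 \<le> 2 ^ nat (j - e)" using False by (intro power_increasing) auto
    hence "n * 2 \<le> m" using m assms(1) by (simp add: mult_left_mono)
    moreover have "(2::int)^53 = 2 * 2^52" by simp
    ultimately show False using me(3) assms(1) by linarith
  qed
qed

lemma double_grid_point:
  assumes "2^52 \<le> n" "n \<le> 2^53" "-1022 \<le> k" "k \<le> 1023" "n = 2^53 \<Longrightarrow> k \<le> 1022"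
  shows "is_double (real_of_int n * 2 powr real_of_int (k - 52))" (is "is_double ?g")
    and "even_double (real_of_int n * 2 powr real_of_int (k - 52)) \<longleftrightarrow> even n"
proof -
  have "is_double ?g \<and> (even_double ?g \<longleftrightarrow> even n)"
  proof (cases "n < 2^53")
    case True
    have "is_double ?g"
      by (rule is_double_intro) (use True assms in auto)
    moreover have "even_double ?g" if "even n"
      by (rule even_double_intro) (use True assms that in auto)
    ultimately show ?thesis
      using not_even_double_odd[of n "k - 52"] True assms(1) by blast
  next
    case False
    hence n: "n = 2^53" using assms(2) by simp
    have shifted: "?g = real_of_int (2^52) * 2 powr real_of_int (k - 51)"
      using two_powr_shift[of "k - 52" "k - 51"] by (simp add: n)
    have "is_double ?g"
      unfolding shifted by (rule is_double_intro) (use n assms in auto)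
    moreover have "even_double ?g"
      unfolding shifted by (rule even_double_intro) (use n assms in auto)
    ultimately show ?thesis by (simp add: n)
  qed
  thus "is_double ?g" "even_double ?g \<longleftrightarrow> even n" by auto
qed

lemma is_double_grid_binade:
  assumes "2 powr real_of_int k \<le> real_of_int n * 2 powr real_of_int (k - 52)"
    and "real_of_int n * 2 powr real_of_int (k - 52) \<le> 2 powr real_of_int (k + 1)"
    and "-1022 \<le> k" "k \<le> 1022"
  shows "is_double (real_of_int n * 2 powr real_of_int (k - 52))"
proof -
  define v :: real where "v = 2 powr real_of_int (k - 52)"
  have "2 powr real_of_int k = 2^52 * v" "2 powr real_of_int (k + 1) = 2^53 * v"
    using two_powr_shift[of "k - 52" k] two_powr_shift[of "k - 52" "k + 1"] by (simp_all add: v_def)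
  hence "2^52 * v \<le> real_of_int n * v" "real_of_int n * v \<le> 2^53 * v"
    using assms(1,2) unfolding v_def by simp_all
  hence "2^52 \<le> real_of_int n" "real_of_int n \<le> 2^53"
    by (simp_all add: v_def)
  hence "2^52 \<le> n" "n \<le> 2^53"
    by (metis of_int_le_iff of_int_numeral of_int_power)+
  thus ?thesis using double_grid_point(1) assms(3,4) by simp
qed

lemma is_double_scale_pow2:
  assumes "is_double g"
    and "2 powr real_of_int k \<le> g * 2 powr real_of_int i" "g * 2 powr real_of_int i \<le> 2 powr real_of_int (k + 1)"
    and "-1022 \<le> k" "k \<le> 1022"
  shows "is_double (g * 2 powr real_of_int i)"
proof -
  have "2 powr real_of_int k \<le> \<bar>g\<bar> * 2 powr real_of_int i"
    using assms(2) by (smt (verit) abs_ge_self mult_right_mono powr_ge_zero)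
  hence "2 powr real_of_int (k - i) \<le> \<bar>g\<bar>"
    by (simp add: powr_diff pos_divide_le_eq)
  then obtain b where "g = real_of_int b * 2 powr real_of_int (k - i - 52)"
    using is_double_on_grid[OF assms(1)] by blast
  hence g: "g * 2 powr real_of_int i = real_of_int b * 2 powr real_of_int (k - 52)"
    by (simp add: powr_add[symmetric])
  show ?thesis
    unfolding g by (rule is_double_grid_binade) (use assms g in auto)
qed

lemma is_double_pow2:
  assumes "-1022 \<le> j" "j \<le> 1023"
  shows "is_double (2 powr real_of_int j)"
proof -
  have "2 powr real_of_int j = real_of_int (2^52) * 2 powr real_of_int (j - 52)"
    using two_powr_shift[of "j - 52" j] by simp
  thus ?thesis using is_double_intro[of "2^52" "j - 52"] assms by simp
qed

lemma no_double_between_grid_points: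
  assumes "is_double g" "2^52 \<le> n"
  shows "g \<le> real_of_int n * 2 powr real_of_int (k - 52) \<or> real_of_int (n + 1) * 2 powr real_of_int (k - 52) \<le> g"
proof (rule ccontr)
  define v :: real where "v = 2 powr real_of_int (k - 52)"
  assume "\<not> ?thesis"
  hence between: "real_of_int n * v < g" "g < real_of_int (n + 1) * v"
    unfolding v_def by auto
  have "2 powr real_of_int k = 2^52 * v"
    unfolding v_def using two_powr_shift[of "k - 52" k] by simp
  also have "\<dots> \<le> real_of_int n * v"
  proof (rule mult_right_mono)
    show "2^52 \<le> real_of_int n"
      using assms(2) by (metis of_int_le_iff of_int_numeral of_int_power)
  qed (simp add: v_def)
  finally have "2 powr real_of_int k \<le> \<bar>g\<bar>" using between by linarith
  then obtain b where "g = real_of_int b * v"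
    using is_double_on_grid[OF assms(1)] unfolding v_def by blast
  hence "n < b" "b < n + 1"
    using between by (simp_all add: v_def mult_less_cancel_right)
  thus False by linarith
qed

definition max_double :: real where
  "max_double = (2^53 - 1) * 2 powr 971"

lemma is_double_max_double: "is_double max_double"
  using is_double_intro[of "2^53 - 1" 971] by (simp add: max_double_def)

lemma abs_double_le_max_double:
  assumes "is_double g"
  shows "\<bar>g\<bar> \<le> max_double"
proof -
  obtain m e where g: "g = real_of_int m * 2 powr real_of_int e" "\<bar>m\<bar> < 2^53" "e \<le> 971"
    using assms unfolding is_double_def by blast
  have "\<bar>m\<bar> \<le> 2^53 - 1" using g(2) by simp
  hence "real_of_int \<bar>m\<bar> \<le> real_of_int (2^53 - 1)"
    by (simp only: of_int_le_iff)
  hence "real_of_int \<bar>m\<bar> \<le> 2^53 - 1"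
    by simp
  moreover have "2 powr real_of_int e \<le> 2 powr (971::real)"
    by (rule powr_mono) (use g(3) in simp_all)
  ultimately have "real_of_int \<bar>m\<bar> * 2 powr real_of_int e \<le> (2^53 - 1) * 2 powr 971"
    by (rule mult_mono) simp_all
  hence "real_of_int \<bar>m\<bar> * 2 powr real_of_int e \<le> max_double"
    by (simp only: max_double_def)
  thus ?thesis using g(1) by (simp add: abs_mult)
qed

definition nearest_double :: "real \<Rightarrow> real \<Rightarrow> bool" where
  "nearest_double f r \<longleftrightarrow> is_double f \<and> (\<forall>g. is_double g \<longrightarrow> \<bar>f - r\<bar> \<le> \<bar>g - r\<bar>)"

lemma rnd_eqI:
  assumes near: "nearest_double f r"
    and tie: "\<And>g. nearest_double g r \<Longrightarrow> g \<noteq> f \<Longrightarrow> even_double f \<and> \<not> even_double g"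
  shows "rnd r = f"
  unfolding rnd_def
proof (rule the_equality, goal_cases)
  case 1
  show ?case
    using near tie unfolding nearest_double_def by force
next
  case (2 f')
  hence near': "nearest_double f' r"
    unfolding nearest_double_def by blast
  show "f' = f"
  proof (rule ccontr)
    assume "f' \<noteq> f"
    moreover have "\<bar>f - r\<bar> = \<bar>f' - r\<bar>"
      using near near' unfolding nearest_double_def by (meson order_antisym)
    ultimately have "even_double f'"
      using 2 near unfolding nearest_double_def by metis
    thus False using tie[OF near' \<open>f' \<noteq> f\<close>] by blast
  qed
qed

lemma rnd_eq_unique_nearest:
  assumes "is_double f" "\<And>g. is_double g \<Longrightarrow> g \<noteq> f \<Longrightarrow> \<bar>f - r\<bar> < \<bar>g - r\<bar>"
  shows "rnd r = f"
proof (rule rnd_eqI)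
  show "nearest_double f r"
    unfolding nearest_double_def using assms by (metis order.refl order.strict_implies_order)
next
  fix g assume "nearest_double g r" "g \<noteq> f"
  thus "even_double f \<and> \<not> even_double g"
    using assms unfolding nearest_double_def by (meson not_le)
qed

lemma rnd_double: "is_double x \<Longrightarrow> rnd x = x"
  by (rule rnd_eq_unique_nearest) auto

lemma nearest_rnd_between:
  assumes lo: "is_double lo" and hi: "is_double hi"
    and gap: "\<And>g. is_double g \<Longrightarrow> g \<le> lo \<or> hi \<le> g"
    and r: "lo \<le> r" "r \<le> hi"
    and parity: "even_double lo \<noteq> even_double hi"
  shows "nearest_double (rnd r) r"
proof -
  have far: "min (r - lo) (hi - r) \<le> \<bar>g - r\<bar>" if "is_double g" for g
    using gap[OF that] r by linarith
  define f where "f = (if r - lo < hi - r \<or> r - lo = hi - r \<and> even_double lo then lo else hi)"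
  have f_dist: "\<bar>f - r\<bar> = min (r - lo) (hi - r)"
    using r by (auto simp: f_def)
  have near: "nearest_double f r"
    unfolding nearest_double_def using f_dist far lo hi by (simp add: f_def)
  have "rnd r = f"
  proof (rule rnd_eqI[OF near])
    fix g assume g: "nearest_double g r" "g \<noteq> f"
    have "\<bar>g - r\<bar> \<le> \<bar>f - r\<bar>"
      using g(1) near unfolding nearest_double_def by blast
    hence "\<bar>g - r\<bar> = min (r - lo) (hi - r)"
      using far[of g] f_dist g(1) unfolding nearest_double_def by linarith
    hence "r - lo = hi - r \<and> {f, g} = {lo, hi}"
      using gap[of g] g r unfolding nearest_double_def f_def by (auto split: if_splits)
    thus "even_double f \<and> \<not> even_double g"
      using parity g(2) unfolding f_def by (auto simp: doubleton_eq_iff)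
  qed
  with near show ?thesis by simp
qed

lemma grid_bracket:
  fixes v r :: real
  assumes "0 < v" "2^52 * v \<le> r" "r \<le> 2^53 * v"
  obtains n :: int where "2^52 \<le> n" "n < 2^53" "real_of_int n * v \<le> r" "r \<le> real_of_int (n + 1) * v"
proof -
  define n where "n = min \<lfloor>r / v\<rfloor> (2^53 - 1)"
  have q: "2^52 \<le> r / v" "r / v \<le> 2^53"
    using assms by (simp_all add: field_simps)
  hence "2^52 \<le> \<lfloor>r / v\<rfloor>"
    by (metis le_floor_iff of_int_numeral of_int_power)
  hence "2^52 \<le> n" "n < 2^53"
    unfolding n_def by simp_all
  moreover have "real_of_int n \<le> r / v" "r / v \<le> real_of_int n + 1"
    using q unfolding n_def by (auto simp: min_def floor_le_iff)
  hence "real_of_int n * v \<le> r" "r \<le> real_of_int (n + 1) * v"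
    using assms(1) by (simp_all add: field_simps)
  ultimately show thesis by (rule that)
qed

lemma nearest_rnd_binade:
  assumes r: "2 powr real_of_int k \<le> r" "r < 2 powr real_of_int (k + 1)"
    and k: "-1022 \<le> k" "k \<le> 1023"
    and below_max: "r < max_double"
  shows "nearest_double (rnd r) r"
proof -
  define v :: real where "v = 2 powr real_of_int (k - 52)"
  have v: "0 < v" "2 powr real_of_int k = 2^52 * v" "2 powr real_of_int (k + 1) = 2^53 * v"
    using two_powr_shift[of "k - 52" k] two_powr_shift[of "k - 52" "k + 1"] by (simp_all add: v_def)
  obtain n where n: "2^52 \<le> n" "n < 2^53" "real_of_int n * v \<le> r" "r \<le> real_of_int (n + 1) * v"
    using grid_bracket[of v r] v r by force
  \<comment> \<open>In the top binade the upper neighbour 2^1024 is not a double; there r < max_double keeps n + 1 below 2^53.\<close>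
  have top: "k \<le> 1022" if "n + 1 = 2^53"
  proof (rule ccontr)
    assume "\<not> k \<le> 1022"
    hence "k = 1023" "n = 2^53 - 1"
      using that k by simp_all
    hence "max_double = real_of_int n * v"
      unfolding max_double_def v_def by simp
    thus False using n(3) below_max by simp
  qed
  have grid_n: "is_double (real_of_int n * v)" "even_double (real_of_int n * v) \<longleftrightarrow> even n"
    unfolding v_def by (rule double_grid_point; use n k in auto)+
  have grid_Suc_n: "is_double (real_of_int (n + 1) * v)"
      "even_double (real_of_int (n + 1) * v) \<longleftrightarrow> even (n + 1)"
    unfolding v_def by (rule double_grid_point; use n k top in auto)+
  show ?thesis
  proof (rule nearest_rnd_between)
    show "even_double (real_of_int n * v) \<noteq> even_double (real_of_int (n + 1) * v)"
      using grid_n(2) grid_Suc_n(2) by simp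
  qed (use n grid_n grid_Suc_n no_double_between_grid_points v_def in auto)
qed

lemma nearest_rnd:
  assumes "2 powr -1022 \<le> r"
  shows "nearest_double (rnd r) r"
proof (cases "max_double \<le> r")
  case True
  \<comment> \<open>The rounding of the finite-range model saturates at max_double instead of overflowing.\<close>
  have "\<bar>max_double - r\<bar> \<le> \<bar>g - r\<bar>" "g \<noteq> max_double \<Longrightarrow> \<bar>max_double - r\<bar> < \<bar>g - r\<bar>"
    if "is_double g" for g
    using abs_double_le_max_double[OF that] True by auto
  hence "rnd r = max_double" "nearest_double max_double r"
    using is_double_max_double unfolding nearest_double_def by (auto intro: rnd_eq_unique_nearest)
  thus ?thesis by simp
next
  case False
  have "0 < r" using assms by (smt (verit) powr_gt_zero)
  define k where "k = \<lfloor>log 2 r\<rfloor>"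
  have r: "2 powr real_of_int k \<le> r" "r < 2 powr real_of_int (k + 1)"
    using floor_log_eq_powr_iff[OF \<open>0 < r\<close>, of 2 k] by (simp_all add: k_def)
  have "2 powr (-1022) < 2 powr real_of_int (k + 1)"
    using assms r(2) by linarith
  hence "-1022 \<le> k" by (simp add: powr_less_cancel_iff)
  have "2 powr real_of_int 1024 = 2 powr real_of_int 971 * (2::real) ^ nat (1024 - 971)"
    by (rule two_powr_shift) simp
  hence "max_double < 2 powr real_of_int 1024"
    by (simp add: max_double_def)
  hence "2 powr real_of_int k < 2 powr real_of_int 1024"
    using r(1) False by linarith
  hence "k \<le> 1023" by (subst (asm) powr_less_cancel_iff) auto
  show ?thesis
    using nearest_rnd_binade r \<open>-1022 \<le> k\<close> \<open>k \<le> 1023\<close> False by simp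
qed

lemma nearest_double_error:
  assumes near: "nearest_double f r"
    and r: "2 powr real_of_int k \<le> r" "r \<le> 2 powr real_of_int (k + 1)"
    and k: "-1022 \<le> k" "k \<le> 1022"
  shows "\<bar>f - r\<bar> \<le> 2 powr real_of_int (k - 53)"
proof -
  define v :: real where "v = 2 powr real_of_int (k - 52)"
  have v: "0 < v" "2 powr real_of_int k = 2^52 * v" "2 powr real_of_int (k + 1) = 2^53 * v"
      "v = 2 * 2 powr real_of_int (k - 53)"
    using two_powr_shift[of "k - 52" k] two_powr_shift[of "k - 52" "k + 1"]
      two_powr_shift[of "k - 53" "k - 52"]
    by (simp_all add: v_def)
  obtain n where n: "2^52 \<le> n" "n < 2^53" "real_of_int n * v \<le> r" "r \<le> real_of_int (n + 1) * v"
    using grid_bracket[of v r] v r by force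
  have "is_double (real_of_int n * v)" "is_double (real_of_int (n + 1) * v)"
    unfolding v_def by (rule double_grid_point; use n k in auto)+
  hence "\<bar>f - r\<bar> \<le> r - real_of_int n * v" "\<bar>f - r\<bar> \<le> real_of_int (n + 1) * v - r"
    using near n(3,4) unfolding nearest_double_def by force+
  thus ?thesis using v(4) by (simp add: distrib_right)
qed

lemma nearest_double_le_double:
  assumes "nearest_double y r" "is_double b" "y < b"
  shows "r \<le> b"
proof (rule ccontr)
  assume "\<not> r \<le> b"
  hence "\<bar>b - r\<bar> < \<bar>y - r\<bar>" using assms(3) by simp
  thus False using assms(1,2) unfolding nearest_double_def by (meson not_le)
qed

lemma double_gap:
  assumes x: "is_double x" "2 powr real_of_int k < x" and g: "is_double g" "g \<noteq> x"
  shows "2 powr real_of_int (k - 52) \<le> \<bar>g - x\<bar>"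
proof -
  define v :: real where "v = 2 powr real_of_int (k - 52)"
  have v: "0 < v" "2 powr real_of_int k = 2^52 * v"
    using two_powr_shift[of "k - 52" k] by (simp_all add: v_def)
  obtain a where a: "x = real_of_int a * v"
    using is_double_on_grid[OF x(1), of k] x(2) unfolding v_def by force
  have "2^52 < real_of_int a" using x(2) v a by simp
  hence "2^52 < a" by (metis of_int_less_iff of_int_numeral of_int_power)
  hence a52: "2^52 + 1 \<le> a" by simp
  show ?thesis
  proof (cases "2 powr real_of_int k \<le> \<bar>g\<bar>")
    case True
    then obtain b where b: "g = real_of_int b * v"
      using is_double_on_grid[OF g(1)] unfolding v_def by blast
    have "1 \<le> \<bar>real_of_int b - real_of_int a\<bar>"
      using g(2) a b by (auto simp flip: of_int_diff)
    hence "1 * v \<le> \<bar>real_of_int b - real_of_int a\<bar> * v"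
      using v(1) by (intro mult_right_mono) auto
    moreover have "\<bar>g - x\<bar> = \<bar>real_of_int b - real_of_int a\<bar> * v"
      using a b v(1) by (simp add: abs_mult flip: left_diff_distrib)
    ultimately show ?thesis by (simp add: v_def)
  next
    case False
    have "real_of_int (2^52 + 1) * v \<le> x"
      unfolding a using a52 v(1) by (intro mult_right_mono) (simp_all only: of_int_le_iff)
    hence "2^52 * v + v \<le> x" by (simp add: distrib_right)
    thus ?thesis using False v unfolding v_def by linarith
  qed
qed

lemma rnd_div_eq_of_close:
  assumes x: "is_double x" "2 powr real_of_int k < x"
    and M: "2 < M"
    and close: "\<bar>y - x * M\<bar> \<le> 2 powr real_of_int (k - 52)"
  shows "rnd (y / M) = x"
proof (rule rnd_eq_unique_nearest[OF x(1)])
  define u :: real where "u = 2 powr real_of_int (k - 52)"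
  have "x - y / M = - ((y - x * M) / M)"
    using M by (simp add: field_simps)
  hence "\<bar>x - y / M\<bar> = \<bar>y - x * M\<bar> / M"
    using M by simp
  also have "\<dots> \<le> u / M"
    using close M by (simp add: u_def divide_right_mono)
  also have "\<dots> < u / 2"
    by (rule divide_strict_left_mono) (use M in \<open>auto simp: u_def\<close>)
  finally have quotient_close: "\<bar>x - y / M\<bar> < u / 2" .
  fix g assume "is_double g" "g \<noteq> x"
  hence "u \<le> \<bar>g - x\<bar>"
    unfolding u_def using double_gap x by blast
  thus "\<bar>x - y / M\<bar> < \<bar>g - y / M\<bar>"
    using quotient_close by linarith
qed

theorem mainTheorem3:
  fixes E :: int and x M :: real
  assumes normal_range: "-1022 \<le> E" "E + 2 \<le> 1023"
    and dx: "is_double x" and dM: "is_double M"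
    and xpos: "x > 0"
    and xrange: "2 powr real_of_int E \<le> x" "x < 2 powr real_of_int (E + 1)"
    and M2: "M \<ge> 2"
    and yrange: "2 powr real_of_int (E + 1) \<le> fmul x M" "fmul x M < 2 powr real_of_int (E + 2)"
  shows "fdiv (fmul x M) M = x"
proof -
  define r where "r = x * M"
  define y where "y = fmul x M"
  have "2 powr real_of_int (E + 1) = 2 powr real_of_int E * 2"
    using two_powr_shift[of E "E + 1"] by simp
  also have "\<dots> \<le> r"
    unfolding r_def using xrange(1) M2 xpos by (intro mult_mono) auto
  finally have r_lo: "2 powr real_of_int (E + 1) \<le> r" .
  have "2 powr (-1022) \<le> 2 powr real_of_int (E + 1)"
    using normal_range by simp
  hence y_near: "nearest_double y r"
    unfolding y_def fmul_def r_def using r_lo r_def by (intro nearest_rnd) linarith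
  have "is_double (2 powr real_of_int (E + 2))"
    by (rule is_double_pow2) (use normal_range in auto)
  hence r_hi: "r \<le> 2 powr real_of_int (E + 2)"
    using nearest_double_le_double[OF y_near] yrange(2) unfolding y_def by blast
  have "\<bar>y - r\<bar> \<le> 2 powr real_of_int (E + 1 - 53)"
    by (rule nearest_double_error[OF y_near r_lo]) (use r_hi normal_range in \<open>simp_all add: add.assoc\<close>)
  hence err: "\<bar>y - x * M\<bar> \<le> 2 powr real_of_int (E - 52)"
    by (simp add: r_def)
  show ?thesis
  proof (cases "M = 2 \<or> x = 2 powr real_of_int E")
    case True
    have "is_double r"
      using True is_double_scale_pow2[OF dx, of "E + 1" 1] is_double_scale_pow2[OF dM, of "E + 1" E]
        r_lo r_hi normal_range
      by (auto simp: r_def add.assoc mult.commute)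
    hence "y = r"
      using y_near unfolding nearest_double_def by fastforce
    thus ?thesis
      using rnd_double[OF dx] M2 by (simp add: fdiv_def y_def r_def)
  next
    case False
    hence "2 < M" "2 powr real_of_int E < x"
      using M2 xrange(1) by auto
    thus ?thesis
      using rnd_div_eq_of_close[OF dx _ _ err] by (simp add: fdiv_def y_def)
  qed
qed

end
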